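(* Let $G=(V,E)$ be a finite simple connected graph with $n=|V|$ vertices and graph distance $d$, and let $\omega\colon V\to(0,\infty)$ be a weight function with total weight $\omega=\omega(V)$. Let $\delta>0$ and $s=\frac{8\ln n}{\delta^2}$. Let $S=\{m_1,\dots,m_s\}$ be a random sample (multiset) of $s$ vertices, drawn independently with $\Pr(m_i=v)=\omega(v)/\omega$, and let $\Phi^{*}(v)=\sum_{u\in S}d(u,v)$. Let $q^{*}=\arg\min_{v\in V}\Phi^{*}(v)$. Then, with probability at least $1-n^{-3}$, $q^{*}$ is $\delta$-close to a median, i.e. $\Lambda(q^{*})\le(\frac12+\delta)\omega$.
   Context: For vertices $q,v$, a vertex $u$ is consistent with $(q,v)$ if $q=v=u$, or $q\ne v$ and $v$ lies on a shortest path between $u$ and $q$; $N(q,v)$ is the set of such $u$. $N(q)$ is the neighbor set of $q$. For $X\subseteq V$, $\omega(X)=\sum_{u\in X}\omega(u)$. $\Lambda(v)=\max_{u\in N(v)}\omega(N(v,u))$. A vertex $q$ is $\delta$-close to a median if $\Lambda(q)\le(\frac12+\delta)\omega(V)$. *)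

theory Defs
  imports "HOL-Probability.Probability"
begin

definition simple_graph :: "'a set \<Rightarrow> ('a \<Rightarrow> 'a \<Rightarrow> bool) \<Rightarrow> bool" where
  "simple_graph V E \<longleftrightarrow> finite V \<and> (\<forall>x y. E x y \<longrightarrow> x \<in> V \<and> y \<in> V)
     \<and> (\<forall>x y. E x y \<longrightarrow> E y x) \<and> (\<forall>x. \<not> E x x)"

definition walk_of_len :: "('a \<Rightarrow> 'a \<Rightarrow> bool) \<Rightarrow> 'a list \<Rightarrow> nat \<Rightarrow> 'a \<Rightarrow> 'a \<Rightarrow> bool" where
  "walk_of_len E xs k u v \<longleftrightarrow> length xs = Suc k \<and> hd xs = u \<and> last xs = v
     \<and> (\<forall>i<k. E (xs ! i) (xs ! Suc i))"

definition connected_graph :: "'a set \<Rightarrow> ('a \<Rightarrow> 'a \<Rightarrow> bool) \<Rightarrow> bool" where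
  "connected_graph V E \<longleftrightarrow> V \<noteq> {} \<and> (\<forall>u\<in>V. \<forall>v\<in>V. \<exists>xs k. walk_of_len E xs k u v)"

definition gdist :: "('a \<Rightarrow> 'a \<Rightarrow> bool) \<Rightarrow> 'a \<Rightarrow> 'a \<Rightarrow> nat" where
  "gdist E u v = (LEAST k. \<exists>xs. walk_of_len E xs k u v)"

definition on_shortest_path :: "('a \<Rightarrow> 'a \<Rightarrow> bool) \<Rightarrow> 'a \<Rightarrow> 'a \<Rightarrow> 'a \<Rightarrow> bool" where
  "on_shortest_path E v u q \<longleftrightarrow>
     (\<exists>xs. walk_of_len E xs (gdist E u q) u q \<and> v \<in> set xs)"

definition consistent_set :: "'a set \<Rightarrow> ('a \<Rightarrow> 'a \<Rightarrow> bool) \<Rightarrow> 'a \<Rightarrow> 'a \<Rightarrow> 'a set" where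
  "consistent_set V E q v =
     {u \<in> V. (q = v \<and> v = u) \<or> (q \<noteq> v \<and> on_shortest_path E v u q)}"

definition nbrs :: "'a set \<Rightarrow> ('a \<Rightarrow> 'a \<Rightarrow> bool) \<Rightarrow> 'a \<Rightarrow> 'a set" where
  "nbrs V E q = {u \<in> V. E q u}"

definition Lambda :: "'a set \<Rightarrow> ('a \<Rightarrow> 'a \<Rightarrow> bool) \<Rightarrow> ('a \<Rightarrow> real) \<Rightarrow> 'a \<Rightarrow> real" where
  "Lambda V E \<omega> v = Max ((\<lambda>u. sum \<omega> (consistent_set V E v u)) ` nbrs V E v)"

definition delta_close :: "'a set \<Rightarrow> ('a \<Rightarrow> 'a \<Rightarrow> bool) \<Rightarrow> ('a \<Rightarrow> real) \<Rightarrow> real \<Rightarrow> 'a \<Rightarrow> bool" where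
  "delta_close V E \<omega> \<delta> q \<longleftrightarrow> Lambda V E \<omega> q \<le> (1/2 + \<delta>) * sum \<omega> V"

definition weight_pmf :: "'a set \<Rightarrow> ('a \<Rightarrow> real) \<Rightarrow> 'a pmf" where
  "weight_pmf V \<omega> = embed_pmf (\<lambda>v. if v \<in> V then \<omega> v / sum \<omega> V else 0)"

definition sample_pmf :: "nat \<Rightarrow> 'a set \<Rightarrow> ('a \<Rightarrow> real) \<Rightarrow> (nat \<Rightarrow> 'a) pmf" where
  "sample_pmf s V \<omega> = Pi_pmf {..<s} undefined (\<lambda>_. weight_pmf V \<omega>)"

definition Phi_sample :: "('a \<Rightarrow> 'a \<Rightarrow> bool) \<Rightarrow> nat \<Rightarrow> (nat \<Rightarrow> 'a) \<Rightarrow> 'a \<Rightarrow> real" where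
  "Phi_sample E s m v = (\<Sum>i<s. real (gdist E (m i) v))"

definition is_argmin_Phi :: "'a set \<Rightarrow> ('a \<Rightarrow> 'a \<Rightarrow> bool) \<Rightarrow> nat \<Rightarrow> (nat \<Rightarrow> 'a) \<Rightarrow> 'a \<Rightarrow> bool" where
  "is_argmin_Phi V E s m q \<longleftrightarrow> q \<in> V \<and> (\<forall>v\<in>V. Phi_sample E s m q \<le> Phi_sample E s m v)"

end

theory Submission imports Defs begin

(* Let q minimise \<Phi>* and let v be a neighbour of q. Moving from q to v shortens the distance
   to every sample in N(q,v) by one and lengthens every other distance by at most one, so
   minimality of q forces at most half of the samples into N(q,v). If q is not \<delta>-close to a
   median, some neighbour v has \<omega>(N(q,v)) > (1/2 + \<delta>) \<omega>(V); the number of samples in N(q,v) is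
   then binomial with success probability above 1/2 + \<delta>, and Hoeffding's inequality bounds the
   probability that it is at most s/2 by exp(-2 s \<delta>^2) <= n^-16. A union bound over the at
   most n^2 ordered edges finishes the proof. *)

lemma map_pmf_mem_eq_bernoulli_pmf:
  "map_pmf (\<lambda>x. x \<in> A) p = bernoulli_pmf (measure_pmf.prob p A)"
proof (rule pmf_eqI)
  fix b :: bool
  have "(\<lambda>x. x \<in> A) -` {False} = UNIV - A" by auto
  then show "pmf (map_pmf (\<lambda>x. x \<in> A) p) b = pmf (bernoulli_pmf (measure_pmf.prob p A)) b"
    using measure_pmf.finite_measure_compl[of A p] by (cases b) (simp_all add: pmf_map vimage_def)
qed

lemma map_pmf_card_Pi_pmf_eq_binomial_pmf:
  "map_pmf (\<lambda>m. card {i\<in>{..<s}. m i \<in> A}) (Pi_pmf {..<s} d (\<lambda>_. p)) =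
     binomial_pmf s (measure_pmf.prob p A)"
proof -
  have "binomial_pmf s (measure_pmf.prob p A) =
      map_pmf (\<lambda>f. card {i\<in>{..<s}. f i}) (Pi_pmf {..<s} (d \<in> A) (\<lambda>_. map_pmf (\<lambda>x. x \<in> A) p))"
    unfolding map_pmf_mem_eq_bernoulli_pmf by (rule binomial_pmf_altdef') auto
  also have "Pi_pmf {..<s} (d \<in> A) (\<lambda>_. map_pmf (\<lambda>x. x \<in> A) p) =
      map_pmf (\<lambda>m. (\<lambda>x. x \<in> A) \<circ> m) (Pi_pmf {..<s} d (\<lambda>_. p))"
    by (rule Pi_pmf_map) auto
  finally show ?thesis by (simp add: pmf.map_comp o_def)
qed

lemma prob_Pi_pmf_minority_le:
  assumes "measure_pmf.prob p A \<ge> 1/2 + \<delta>" and "\<delta> \<ge> 0"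
  shows "measure_pmf.prob (Pi_pmf {..<s} d (\<lambda>_. p)) {m. 2 * card {i\<in>{..<s}. m i \<in> A} \<le> s}
           \<le> exp (- 2 * real s * \<delta>\<^sup>2)"
proof (cases "s = 0")
  case False
  let ?q = "measure_pmf.prob p A"
  have "measure_pmf.prob (Pi_pmf {..<s} d (\<lambda>_. p)) {m. 2 * card {i\<in>{..<s}. m i \<in> A} \<le> s}
      = measure_pmf.prob (binomial_pmf s ?q) {k. 2 * k \<le> s}"
    by (simp flip: map_pmf_card_Pi_pmf_eq_binomial_pmf[of s A d p] add: vimage_def)
  also have "\<dots> \<le> measure_pmf.prob (binomial_pmf s ?q) {k. k / s \<le> ?q - \<delta>}"
  proof (intro measure_pmf.finite_measure_mono subsetI)
    fix k assume "k \<in> {k. 2 * k \<le> s}"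
    then have "real k / s \<le> 1/2" using False by (simp add: field_simps)
    with assms(1) show "k \<in> {k. k / s \<le> ?q - \<delta>}" by (simp only: mem_Collect_eq)
  qed simp
  also have "\<dots> \<le> exp (- 2 * real s * \<delta>\<^sup>2)"
    using binomial_distribution.prob_le'[of ?q s \<delta>] False assms(2) by (simp add: binomial_distribution_def)
  finally show ?thesis .
qed simp

lemma measure_pmf_union_bound:
  assumes "finite I" and "A \<inter> set_pmf M \<subseteq> (\<Union>i\<in>I. B i)"
    and "\<And>i. i \<in> I \<Longrightarrow> measure_pmf.prob M (B i) \<le> c"
  shows "measure_pmf.prob M A \<le> real (card I) * c"
proof -
  have "measure_pmf.prob M A = measure_pmf.prob M (A \<inter> set_pmf M)"
    by (simp add: measure_Int_set_pmf)
  also have "\<dots> \<le> measure_pmf.prob M (\<Union>i\<in>I. B i)"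
    using assms(2) by (intro measure_pmf.finite_measure_mono) auto
  also have "\<dots> \<le> (\<Sum>i\<in>I. measure_pmf.prob M (B i))"
    using assms(1) by (intro measure_pmf.finite_measure_subadditive_finite) auto
  also have "\<dots> \<le> (\<Sum>i\<in>I. c)" using assms(3) by (rule sum_mono)
  finally show ?thesis by simp
qed

lemma pmf_weight_pmf:
  assumes "finite V" and "\<forall>v\<in>V. \<omega> v > 0" and "V \<noteq> {}"
  shows "pmf (weight_pmf V \<omega>) x = (if x \<in> V then \<omega> x / sum \<omega> V else 0)"
proof -
  let ?f = "\<lambda>v. if v \<in> V then \<omega> v / sum \<omega> V else 0"
  have total: "sum \<omega> V > 0" using assms by (intro sum_pos) auto
  then have nonneg: "\<And>x. 0 \<le> ?f x" using assms(2) by (auto intro!: divide_nonneg_pos less_imp_le)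
  have "(\<integral>\<^sup>+x. ennreal (?f x) \<partial>count_space UNIV) = (\<Sum>x\<in>V. ennreal (?f x))"
    by (rule nn_integral_count_space') (use assms(1) nonneg in auto)
  also have "\<dots> = ennreal (\<Sum>x\<in>V. ?f x)" by (rule sum_ennreal) (rule nonneg)
  also have "(\<Sum>x\<in>V. ?f x) = 1" using total by (simp flip: sum_divide_distrib)
  finally show ?thesis unfolding weight_pmf_def using nonneg by (subst pmf_embed_pmf) auto
qed

lemma set_pmf_weight_pmf_subset:
  assumes "finite V" and "\<forall>v\<in>V. \<omega> v > 0" and "V \<noteq> {}"
  shows "set_pmf (weight_pmf V \<omega>) \<subseteq> V"
  using pmf_weight_pmf[OF assms] by (auto simp: set_pmf_eq split: if_splits)

lemma prob_weight_pmf: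
  assumes "finite V" and "\<forall>v\<in>V. \<omega> v > 0" and "V \<noteq> {}" and "A \<subseteq> V"
  shows "measure_pmf.prob (weight_pmf V \<omega>) A = sum \<omega> A / sum \<omega> V"
proof -
  have "measure_pmf.prob (weight_pmf V \<omega>) A = sum (pmf (weight_pmf V \<omega>)) A"
    using assms(1,4) by (intro measure_measure_pmf_finite) (rule finite_subset)
  also have "\<dots> = (\<Sum>x\<in>A. \<omega> x / sum \<omega> V)"
    using assms(4) by (intro sum.cong) (auto simp: pmf_weight_pmf[OF assms(1-3)])
  finally show ?thesis by (simp add: sum_divide_distrib)
qed

lemma set_pmf_sample_pmfD:
  assumes "finite V" and "\<forall>v\<in>V. \<omega> v > 0" and "V \<noteq> {}"
    and "m \<in> set_pmf (sample_pmf s V \<omega>)" and "i < s"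
  shows "m i \<in> V"
proof -
  have "m i \<in> set_pmf (weight_pmf V \<omega>)"
    using assms(4,5) unfolding sample_pmf_def by (auto simp: set_Pi_pmf PiE_dflt_def)
  then show ?thesis using set_pmf_weight_pmf_subset[OF assms(1-3)] by blast
qed

lemma prob_sample_pmf_minority_le:
  assumes "finite V" and "\<forall>v\<in>V. \<omega> v > 0" and "V \<noteq> {}" and "A \<subseteq> V"
    and "sum \<omega> A > (1/2 + \<delta>) * sum \<omega> V" and "\<delta> \<ge> 0"
  shows "measure_pmf.prob (sample_pmf s V \<omega>) {m. 2 * card {i\<in>{..<s}. m i \<in> A} \<le> s}
           \<le> exp (- 2 * real s * \<delta>\<^sup>2)"
proof -
  have "sum \<omega> V > 0" using assms(1-3) by (intro sum_pos) auto
  with assms(5) have "measure_pmf.prob (weight_pmf V \<omega>) A \<ge> 1/2 + \<delta>"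
    by (subst prob_weight_pmf[OF assms(1-4)]) (auto simp: field_simps)
  then show ?thesis unfolding sample_pmf_def using assms(6) by (rule prob_Pi_pmf_minority_le)
qed

lemma walk_of_len_nth_last:
  assumes "walk_of_len E xs k u v"
  shows "xs ! k = v"
  using assms by (cases xs rule: rev_cases) (auto simp: walk_of_len_def nth_append)

lemma walk_of_len_snoc:
  assumes "walk_of_len E xs k u w" and "E w v"
  shows "walk_of_len E (xs @ [v]) (Suc k) u v"
proof -
  have len: "length xs = Suc k" and "hd xs = u" and steps: "\<forall>i<k. E (xs ! i) (xs ! Suc i)"
    using assms(1) by (auto simp: walk_of_len_def)
  moreover have "\<forall>i<Suc k. E ((xs @ [v]) ! i) ((xs @ [v]) ! Suc i)"
    using steps len assms(2) walk_of_len_nth_last[OF assms(1)] by (auto simp: nth_append less_Suc_eq)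
  ultimately show ?thesis by (cases xs) (auto simp: walk_of_len_def)
qed

lemma walk_of_len_take:
  assumes "walk_of_len E xs k u v" and "j \<le> k"
  shows "walk_of_len E (take (Suc j) xs) j u (xs ! j)"
proof -
  have "length xs = Suc k" and "hd xs = u" and "\<forall>i<k. E (xs ! i) (xs ! Suc i)"
    using assms(1) by (auto simp: walk_of_len_def)
  moreover from this have "last (take (Suc j) xs) = xs ! j"
    using assms(2) by (subst last_conv_nth) auto
  ultimately show ?thesis using assms(2) by (simp add: walk_of_len_def)
qed

lemma gdist_le_walk_length: "walk_of_len E xs k u v \<Longrightarrow> gdist E u v \<le> k"
  unfolding gdist_def by (rule Least_le) blast

lemma shortest_walk_exists:
  assumes "connected_graph V E" and "u \<in> V" and "v \<in> V"
  obtains xs where "walk_of_len E xs (gdist E u v) u v"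
proof -
  have "\<exists>k xs. walk_of_len E xs k u v" using assms unfolding connected_graph_def by blast
  then have "\<exists>xs. walk_of_len E xs (LEAST k. \<exists>xs. walk_of_len E xs k u v) u v" by (rule LeastI_ex)
  with that show ?thesis unfolding gdist_def by blast
qed

lemma gdist_neighbour_le:
  assumes "connected_graph V E" and "u \<in> V" and "q \<in> V" and "E q v"
  shows "gdist E u v \<le> gdist E u q + 1"
proof -
  obtain xs where "walk_of_len E xs (gdist E u q) u q"
    using shortest_walk_exists[OF assms(1-3)] .
  from walk_of_len_snoc[OF this assms(4)] have "gdist E u v \<le> Suc (gdist E u q)"
    by (rule gdist_le_walk_length)
  then show ?thesis by simp
qed

lemma gdist_consistent_less:
  assumes "u \<in> consistent_set V E q v" and "q \<noteq> v"
  shows "gdist E u v < gdist E u q"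
proof -
  let ?k = "gdist E u q"
  obtain xs where walk: "walk_of_len E xs ?k u q" and "v \<in> set xs"
    using assms by (auto simp: consistent_set_def on_shortest_path_def)
  then obtain j where j: "j < length xs" "xs ! j = v" by (auto simp: in_set_conv_nth)
  have "length xs = Suc ?k" using walk by (simp add: walk_of_len_def)
  moreover have "xs ! ?k = q" using walk by (rule walk_of_len_nth_last)
  ultimately have "j < ?k" using j assms(2) by (cases "j = ?k") auto
  then have "walk_of_len E (take (Suc j) xs) j u v" using walk_of_len_take[OF walk, of j] j(2) by simp
  then have "gdist E u v \<le> j" by (rule gdist_le_walk_length)
  with \<open>j < ?k\<close> show ?thesis by simp
qed

lemma nbrs_nonempty:
  assumes "simple_graph V E" and "connected_graph V E" and "q \<in> V" and "card V \<ge> 2"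
  shows "nbrs V E q \<noteq> {}"
proof -
  have "\<not> V \<subseteq> {q}"
  proof
    assume "V \<subseteq> {q}"
    then have "card V \<le> 1" using card_mono[of "{q}" V] by simp
    with assms(4) show False by simp
  qed
  then obtain w where w: "w \<in> V" "w \<noteq> q" by blast
  then obtain xs k where walk: "walk_of_len E xs k q w"
    using assms(2,3) unfolding connected_graph_def by blast
  then have "k \<noteq> 0" using w(2) by (cases xs) (auto simp: walk_of_len_def)
  with walk have "E q (xs ! 1)" by (cases xs) (auto simp: walk_of_len_def)
  then show ?thesis using assms(1) by (auto simp: nbrs_def simple_graph_def)
qed

lemma consistent_set_subset: "consistent_set V E q v \<subseteq> V"
  by (auto simp: consistent_set_def)

lemma Phi_sample_neighbour_le:
  assumes "connected_graph V E" and "\<forall>i<s. m i \<in> V" and "q \<in> V" and "E q v" and "q \<noteq> v"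
  shows "Phi_sample E s m v
           \<le> Phi_sample E s m q + real s - 2 * real (card {i\<in>{..<s}. m i \<in> consistent_set V E q v})"
proof -
  let ?C = "{i\<in>{..<s}. m i \<in> consistent_set V E q v}"
  let ?\<chi> = "\<lambda>i. if i \<in> ?C then 1 else 0 :: real"
  have step: "real (gdist E (m i) v) \<le> real (gdist E (m i) q) + (1 - 2 * ?\<chi> i)" if "i < s" for i
    using gdist_consistent_less[of "m i" V E q v] gdist_neighbour_le[OF assms(1) _ assms(3,4), of "m i"]
      assms(2,5) that by force
  have "Phi_sample E s m v \<le> (\<Sum>i<s. real (gdist E (m i) q) + (1 - 2 * ?\<chi> i))"
    unfolding Phi_sample_def using step by (intro sum_mono) auto
  also have "\<dots> = Phi_sample E s m q + real s - 2 * (\<Sum>i<s. ?\<chi> i)"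
    by (simp add: Phi_sample_def sum.distrib sum_subtractf sum_distrib_left)
  also have "(\<Sum>i<s. ?\<chi> i) = real (card ?C)"
    by (simp add: sum.If_cases Collect_conj_eq lessThan_def Int_commute)
  finally show ?thesis .
qed

lemma argmin_Phi_consistent_minority:
  assumes "simple_graph V E" and "connected_graph V E" and "\<forall>i<s. m i \<in> V"
    and "is_argmin_Phi V E s m q" and "E q v"
  shows "2 * card {i\<in>{..<s}. m i \<in> consistent_set V E q v} \<le> s"
proof -
  have "q \<noteq> v" and "v \<in> V" using assms(1,5) by (auto simp: simple_graph_def)
  moreover have "q \<in> V" using assms(4) by (simp add: is_argmin_Phi_def)
  ultimately have "Phi_sample E s m v
      \<le> Phi_sample E s m q + real s - 2 * real (card {i\<in>{..<s}. m i \<in> consistent_set V E q v})"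
    "Phi_sample E s m q \<le> Phi_sample E s m v"
    using Phi_sample_neighbour_le[OF assms(2,3) _ assms(5)] assms(4) by (auto simp: is_argmin_Phi_def)
  then show ?thesis by linarith
qed

lemma heavy_neighbour_if_not_delta_close:
  assumes "simple_graph V E" and "connected_graph V E" and "q \<in> V" and "card V \<ge> 2"
    and "\<not> delta_close V E \<omega> \<delta> q"
  obtains v where "E q v" and "v \<in> V" and "sum \<omega> (consistent_set V E q v) > (1/2 + \<delta>) * sum \<omega> V"
proof -
  have "finite (nbrs V E q)" using assms(1) by (simp add: simple_graph_def nbrs_def)
  then have "Lambda V E \<omega> q \<in> (\<lambda>u. sum \<omega> (consistent_set V E q u)) ` nbrs V E q"
    unfolding Lambda_def using nbrs_nonempty[OF assms(1-4)] by (intro Max_in) auto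
  then show ?thesis using that assms(5) by (auto simp: nbrs_def delta_close_def)
qed

lemma heavy_minority_if_argmin_Phi_not_delta_close:
  assumes "simple_graph V E" and "connected_graph V E" and "card V \<ge> 2" and "\<forall>i<s. m i \<in> V"
    and "is_argmin_Phi V E s m q" and "\<not> delta_close V E \<omega> \<delta> q"
  obtains v where "q \<in> V" and "v \<in> V" and "E q v"
    and "sum \<omega> (consistent_set V E q v) > (1/2 + \<delta>) * sum \<omega> V"
    and "2 * card {i\<in>{..<s}. m i \<in> consistent_set V E q v} \<le> s"
proof -
  have "q \<in> V" using assms(5) by (simp add: is_argmin_Phi_def)
  then obtain v where "E q v" "v \<in> V" "sum \<omega> (consistent_set V E q v) > (1/2 + \<delta>) * sum \<omega> V"
    using heavy_neighbour_if_not_delta_close[OF assms(1,2) _ assms(3,6)] by blast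
  with that show ?thesis using \<open>q \<in> V\<close> argmin_Phi_consistent_minority[OF assms(1,2,4,5)] by blast
qed

lemma prob_argmin_Phi_not_delta_close_le:
  assumes "simple_graph V E" and "connected_graph V E" and "\<forall>v\<in>V. \<omega> v > 0"
    and "\<delta> \<ge> 0" and "card V \<ge> 2"
  shows "measure_pmf.prob (sample_pmf s V \<omega>)
           {m. \<exists>q. is_argmin_Phi V E s m q \<and> \<not> delta_close V E \<omega> \<delta> q}
         \<le> real (card V) ^ 2 * exp (- 2 * real s * \<delta>\<^sup>2)"
proof -
  have fin: "finite V" using assms(1) by (simp add: simple_graph_def)
  have ne: "V \<noteq> {}" using assms(2) by (simp add: connected_graph_def)
  let ?M = "sample_pmf s V \<omega>"
  let ?bad = "{m. \<exists>q. is_argmin_Phi V E s m q \<and> \<not> delta_close V E \<omega> \<delta> q}"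
  let ?N = "\<lambda>(q, v). consistent_set V E q v"
  define heavy where
    "heavy = {(q, v) \<in> V \<times> V. E q v \<and> sum \<omega> (consistent_set V E q v) > (1/2 + \<delta>) * sum \<omega> V}"
  define minority where "minority A = {m. 2 * card {i\<in>{..<s}. m i \<in> A} \<le> s}" for A :: "'a set"
  have "heavy \<subseteq> V \<times> V" unfolding heavy_def by auto
  then have fin_heavy: "finite heavy" and "card heavy \<le> card (V \<times> V)"
    using fin finite_subset card_mono[of "V \<times> V" heavy] by auto
  then have card_heavy: "real (card heavy) \<le> real (card V) ^ 2"
    by (simp add: card_cartesian_product power2_eq_square flip: of_nat_mult)
  have "measure_pmf.prob ?M ?bad \<le> real (card heavy) * exp (- 2 * real s * \<delta>\<^sup>2)"
  proof (rule measure_pmf_union_bound[OF fin_heavy])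
    show "?bad \<inter> set_pmf ?M \<subseteq> (\<Union>e\<in>heavy. minority (?N e))"
    proof
      fix m assume m: "m \<in> ?bad \<inter> set_pmf ?M"
      then have mV: "\<forall>i<s. m i \<in> V" using set_pmf_sample_pmfD[OF fin assms(3) ne] by blast
      from m obtain q where "is_argmin_Phi V E s m q" "\<not> delta_close V E \<omega> \<delta> q" by blast
      then obtain v where "q \<in> V" "v \<in> V" "E q v"
        "sum \<omega> (consistent_set V E q v) > (1/2 + \<delta>) * sum \<omega> V"
        "2 * card {i\<in>{..<s}. m i \<in> consistent_set V E q v} \<le> s"
        by (rule heavy_minority_if_argmin_Phi_not_delta_close[OF assms(1,2,5) mV])
      then have "(q, v) \<in> heavy" and "m \<in> minority (?N (q, v))"
        unfolding heavy_def minority_def by auto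
      then show "m \<in> (\<Union>e\<in>heavy. minority (?N e))" by blast
    qed
  next
    fix e assume "e \<in> heavy"
    then obtain q v where "e = (q, v)" and "sum \<omega> (consistent_set V E q v) > (1/2 + \<delta>) * sum \<omega> V"
      unfolding heavy_def by auto
    then show "measure_pmf.prob ?M (minority (?N e)) \<le> exp (- 2 * real s * \<delta>\<^sup>2)"
      unfolding minority_def
      using prob_sample_pmf_minority_le[OF fin assms(3) ne consistent_set_subset _ assms(4)] by simp
  qed
  also have "\<dots> \<le> real (card V) ^ 2 * exp (- 2 * real s * \<delta>\<^sup>2)"
    using card_heavy by (simp add: mult_right_mono)
  finally show ?thesis .
qed

lemma exp_le_inverse_power_if_sample_size_ge:
  assumes "\<delta> > 0" and "n \<ge> 1" and "real s \<ge> 8 * ln (real n) / \<delta>\<^sup>2"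
  shows "exp (- 2 * real s * \<delta>\<^sup>2) \<le> 1 / real n ^ 16"
proof -
  have "16 * ln (real n) \<le> 2 * real s * \<delta>\<^sup>2" using assms(1,3) by (simp add: field_simps)
  then have "exp (- 2 * real s * \<delta>\<^sup>2) \<le> exp (- ln (real n ^ 16))"
    using assms(2) by (simp add: ln_realpow)
  also have "\<dots> = 1 / real n ^ 16" using assms(2) by (simp add: exp_minus inverse_eq_divide)
  finally show ?thesis .
qed

theorem corollary5:
  fixes V :: "'a set" and E :: "'a \<Rightarrow> 'a \<Rightarrow> bool" and \<omega> :: "'a \<Rightarrow> real"
    and \<delta> :: real and n s :: nat
  assumes "simple_graph V E" and "connected_graph V E"
    and "\<forall>v\<in>V. \<omega> v > 0"
    and "\<delta> > 0"
    and "n = card V"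
    and "s = nat \<lceil>8 * ln (real n) / \<delta>\<^sup>2\<rceil>"
  shows "measure_pmf.prob (sample_pmf s V \<omega>)
           {m. \<forall>q. is_argmin_Phi V E s m q \<longrightarrow> delta_close V E \<omega> \<delta> q}
         \<ge> 1 - 1 / real n ^ 3"
proof (cases "n = 1")
  case False
  let ?M = "sample_pmf s V \<omega>"
  let ?good = "{m. \<forall>q. is_argmin_Phi V E s m q \<longrightarrow> delta_close V E \<omega> \<delta> q}"
  have "n \<noteq> 0" using assms(1,2,5) by (simp add: simple_graph_def connected_graph_def)
  with False have n: "n \<ge> 2" by simp
  have "real s \<ge> 8 * ln (real n) / \<delta>\<^sup>2" unfolding assms(6) by linarith
  then have exp_bound: "exp (- 2 * real s * \<delta>\<^sup>2) \<le> 1 / real n ^ 16"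
    using assms(4) n by (intro exp_le_inverse_power_if_sample_size_ge) auto
  have "1 - measure_pmf.prob ?M ?good = measure_pmf.prob ?M (UNIV - ?good)"
    using measure_pmf.finite_measure_compl[of ?good ?M] by (simp add: measure_pmf.prob_space)
  also have "\<dots> \<le> real n ^ 2 * exp (- 2 * real s * \<delta>\<^sup>2)"
    using prob_argmin_Phi_not_delta_close_le[OF assms(1-3), of \<delta> s] assms(4,5) n
    by (simp add: set_diff_eq)
  also have "\<dots> \<le> real n ^ 2 * (1 / real n ^ 16)"
    using exp_bound by (intro mult_left_mono) auto
  also have "\<dots> \<le> 1 / real n ^ 3"
    using n by (simp add: field_simps power_add[symmetric] power_increasing)
  finally show ?thesis by simp
qed simp \<comment> \<open>for n = 1 the claimed bound is 0 (and \<Lambda> would be a maximum over no neighbours)\<close>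

end
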